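(* Let $M$ be an abelian group of odd order with exponent greater than $2$. Then $\mathrm{Aut}(L_M)\cong S_3\times\mathrm{Aut}(M)$ and $\mathrm{Half}(L_M)\cong C_2\times S_3\times\mathrm{Aut}(M)$.
   Context: Let $K=\{1,a,b,c\}$ be the Klein four-group. Set $L_M=K\times M$ with the operation $(A,x)*(B,y)=(AB,xy)$ if $B=1$, and $(A,x)*(B,y)=(AB,x^{-1}y)$ if $B\neq 1$. $\mathrm{Half}(L_M)$ denotes the group of half-automorphisms of $L_M$, i.e. bijections $f$ with $f(XY)\in\{f(X)f(Y),f(Y)f(X)\}$ for all $X,Y$. $S_3$ is the symmetric group on three letters and $C_2$ the cyclic group of order $2$. *)

theory Defs
  imports "HOL-Algebra.Algebra"
begin

datatype klein = K1 | Ka | Kb | Kc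

fun klein_mult :: "klein \<Rightarrow> klein \<Rightarrow> klein" where
  "klein_mult K1 y = y"
| "klein_mult x K1 = x"
| "klein_mult Ka Ka = K1" | "klein_mult Ka Kb = Kc" | "klein_mult Ka Kc = Kb"
| "klein_mult Kb Ka = Kc" | "klein_mult Kb Kb = K1" | "klein_mult Kb Kc = Ka"
| "klein_mult Kc Ka = Kb" | "klein_mult Kc Kb = Ka" | "klein_mult Kc Kc = K1"

definition L_loop :: "('a, 'b) monoid_scheme \<Rightarrow> (klein \<times> 'a) monoid" where
  "L_loop M = \<lparr> carrier = UNIV \<times> carrier M,
     monoid.mult = (\<lambda>p q. (klein_mult (fst p) (fst q),
               if fst q = K1 then snd p \<otimes>\<^bsub>M\<^esub> snd q
               else inv\<^bsub>M\<^esub> (snd p) \<otimes>\<^bsub>M\<^esub> snd q)),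
     one = (K1, \<one>\<^bsub>M\<^esub>) \<rparr>"

text \<open>Half-automorphisms: bijections f of the carrier with f(XY) \<in> {f(X)f(Y), f(Y)f(X)}.
  As for the library's automorphism group, maps are taken extensional on the carrier.\<close>
definition half_auto :: "('a, 'b) monoid_scheme \<Rightarrow> ('a \<Rightarrow> 'a) set" where
  "half_auto G = {f \<in> Bij (carrier G). \<forall>x\<in>carrier G. \<forall>y\<in>carrier G.
      f (x \<otimes>\<^bsub>G\<^esub> y) = f x \<otimes>\<^bsub>G\<^esub> f y \<or> f (x \<otimes>\<^bsub>G\<^esub> y) = f y \<otimes>\<^bsub>G\<^esub> f x}"

definition HalfGroup :: "('a, 'b) monoid_scheme \<Rightarrow> ('a \<Rightarrow> 'a) monoid" where
  "HalfGroup G = BijGroup (carrier G) \<lparr>carrier := half_auto G\<rparr>"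

definition group_exponent :: "('a, 'b) monoid_scheme \<Rightarrow> nat" where
  "group_exponent G = (LEAST n. 0 < n \<and> (\<forall>x\<in>carrier G. x [^]\<^bsub>G\<^esub> n = \<one>\<^bsub>G\<^esub>))"

end

theory Submission
  imports Defs
begin

text \<open>A half-automorphism \<open>f\<close> of \<open>L\<^sub>M\<close> fixes the identity and maps \<open>{1} \<times> M\<close> onto itself,
  where it restricts to an automorphism \<open>\<phi>\<close> of \<open>M\<close>: a half-homomorphism of an abelian group is a
  homomorphism. Since \<open>|M|\<close> is odd, squaring is injective on \<open>M\<close> and \<open>x\<inverse> = x\<close> only for \<open>x = 1\<close>;
  comparing \<open>f\<close> on the products \<open>(A, x)(B, y)\<close> with these facts shows that the K-coordinate of
  \<open>f(A, x)\<close> is \<open>\<pi>(A)\<close> for an automorphism \<open>\<pi>\<close> of K (an element of \<open>S\<^sub>3\<close>), and that the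
  M-coordinate is \<open>\<phi>(x)\<close> for \<open>A = 1\<close> and, uniformly in \<open>A \<noteq> 1\<close>, either always \<open>\<phi>(x)\<close> or always
  \<open>\<phi>(x)\<inverse>\<close>. Conversely all these maps are half-automorphisms, they compose like
  \<open>C\<^sub>2 \<times> S\<^sub>3 \<times> Aut(M)\<close>, and the automorphisms are exactly those without inversion.\<close>

lemma UNIV_klein: "UNIV = {K1, Ka, Kb, Kc}"
  using klein.exhaust by auto

instance klein :: finite
  by standard (simp add: UNIV_klein)

lemma klein_mult_commute: "klein_mult A B = klein_mult B A"
  by (cases A; cases B; simp)

lemma klein_mult_self [simp]: "klein_mult A A = K1"
  by (cases A; simp)

lemma klein_mult_K1_right [simp]: "klein_mult A K1 = A"
  by (cases A; simp)

lemma klein_mult_eq_K1_iff: "klein_mult A B = K1 \<longleftrightarrow> A = B"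
  by (cases A; cases B; simp)

lemma klein_mult_distinct: "distinct [K1, A, B] \<Longrightarrow> distinct [K1, A, B, klein_mult A B]"
  by (cases A; cases B; simp)

lemma klein_mult_third: "distinct [K1, A, B, C] \<Longrightarrow> klein_mult A B = C"
  by (cases A; cases B; cases C; simp)

lemma klein_eq_mult_distinct: "C \<noteq> K1 \<Longrightarrow> \<exists>A B. distinct [K1, A, B] \<and> klein_mult A B = C"
proof -
  have "distinct [K1, Kb, Kc] \<and> klein_mult Kb Kc = Ka" "distinct [K1, Ka, Kc] \<and> klein_mult Ka Kc = Kb"
    "distinct [K1, Ka, Kb] \<and> klein_mult Ka Kb = Kc"
    by simp_all
  then show "C \<noteq> K1 \<Longrightarrow> ?thesis"
    by (cases C) blast+
qed

lemma klein_hom_if_inj_fixes_K1: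
  assumes "inj \<pi>" and "\<pi> K1 = K1"
  shows "\<pi> (klein_mult A B) = klein_mult (\<pi> A) (\<pi> B)"
proof (cases "distinct [K1, A, B]")
  case True
  then have "distinct (map \<pi> [K1, A, B, klein_mult A B])"
    using klein_mult_distinct inj_on_subset[OF assms(1)] by (simp only: distinct_map) blast
  then show ?thesis using assms(2) by (intro klein_mult_third[symmetric]) simp
next
  case False
  then show ?thesis using assms by (auto simp: klein_mult_commute)
qed

text \<open>Identifying \<open>Ka, Kb, Kc\<close> with \<open>1, 2, 3\<close> lets \<open>sym_group 3\<close> act on K.\<close>

fun klein_of_nat :: "nat \<Rightarrow> klein" where
  "klein_of_nat 0 = K1"
| "klein_of_nat (Suc 0) = Ka"
| "klein_of_nat (Suc (Suc 0)) = Kb"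
| "klein_of_nat _ = Kc"

fun nat_of_klein :: "klein \<Rightarrow> nat" where
  "nat_of_klein K1 = 0" | "nat_of_klein Ka = 1" | "nat_of_klein Kb = 2" | "nat_of_klein Kc = 3"

definition klein_perm :: "(nat \<Rightarrow> nat) \<Rightarrow> klein \<Rightarrow> klein" where
  "klein_perm p A = klein_of_nat (p (nat_of_klein A))"

lemma klein_of_nat_of_klein [simp]: "klein_of_nat (nat_of_klein A) = A"
  by (cases A) (simp_all add: numeral_eq_Suc)

lemma nat_of_klein_of_nat: "n \<le> 3 \<Longrightarrow> nat_of_klein (klein_of_nat n) = n"
  by (cases n rule: klein_of_nat.cases) simp_all

lemma nat_of_klein_le: "nat_of_klein A \<le> 3"
  by (cases A) simp_all

lemma bij_betw_nat_of_klein: "bij_betw nat_of_klein UNIV {0..3}"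
proof (rule bij_betw_byWitness[where f' = klein_of_nat])
  show "nat_of_klein ` UNIV \<subseteq> {0..3}"
    using nat_of_klein_le by auto
qed (simp_all add: nat_of_klein_of_nat)

lemma permutes_3_le:
  fixes p :: "nat \<Rightarrow> nat"
  assumes "p permutes {1..3}" and "n \<le> 3"
  shows "p n \<le> 3"
proof -
  have "p permutes {0..3}"
    using assms(1) by (rule permutes_subset) auto
  then show ?thesis
    using permutes_in_image[of p "{0..3}" n] assms(2) by simp
qed

lemma klein_perm_K1 [simp]: "p permutes {1..3} \<Longrightarrow> klein_perm p K1 = K1"
  by (simp add: klein_perm_def permutes_not_in)

lemma klein_perm_compose:
  "q permutes {1..3} \<Longrightarrow> klein_perm (p \<circ> q) = klein_perm p \<circ> klein_perm q"
proof
  fix A assume "q permutes {1..3}"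
  then show "klein_perm (p \<circ> q) A = (klein_perm p \<circ> klein_perm q) A"
    by (simp add: klein_perm_def nat_of_klein_of_nat nat_of_klein_le permutes_3_le)
qed

lemma inj_klein_perm:
  assumes "p permutes {1..3}"
  shows "inj (klein_perm p)"
proof (rule injI)
  fix A B assume "klein_perm p A = klein_perm p B"
  then have "nat_of_klein (klein_of_nat (p (nat_of_klein A)))
      = nat_of_klein (klein_of_nat (p (nat_of_klein B)))"
    by (simp add: klein_perm_def)
  then have "p (nat_of_klein A) = p (nat_of_klein B)"
    using assms by (simp add: nat_of_klein_of_nat nat_of_klein_le permutes_3_le)
  then have "nat_of_klein A = nat_of_klein B"
    using permutes_inj[OF assms] by (simp add: inj_eq)
  then show "A = B"
    by (metis klein_of_nat_of_klein)
qed

lemma klein_perm_mult: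
  "p permutes {1..3} \<Longrightarrow> klein_perm p (klein_mult A B) = klein_mult (klein_perm p A) (klein_perm p B)"
  by (rule klein_hom_if_inj_fixes_K1[OF inj_klein_perm klein_perm_K1])

lemma klein_perm_eq_K1_iff [simp]: "p permutes {1..3} \<Longrightarrow> klein_perm p A = K1 \<longleftrightarrow> A = K1"
  by (metis inj_klein_perm klein_perm_K1 injD)

lemma klein_perm_inject:
  assumes p: "p permutes {1..3}" and q: "q permutes {1..3}" and eq: "klein_perm p = klein_perm q"
  shows "p = q"
proof
  fix n show "p n = q n"
  proof (cases "n \<in> {1..3}")
    case True
    then have "nat_of_klein (klein_of_nat (p n)) = nat_of_klein (klein_of_nat (q n))"
      using fun_cong[OF eq, of "klein_of_nat n"] by (simp add: klein_perm_def nat_of_klein_of_nat)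
    then show ?thesis
      using True p q by (simp add: nat_of_klein_of_nat permutes_3_le)
  next
    case False
    then show ?thesis using p q by (simp add: permutes_not_in)
  qed
qed

lemma klein_perm_surj:
  assumes "inj \<pi>" and "\<pi> K1 = K1"
  obtains p where "p permutes {1..3}" and "klein_perm p = \<pi>"
proof
  define p where "p n = (if n \<le> 3 then nat_of_klein (\<pi> (klein_of_nat n)) else n)" for n
  have "bij_betw klein_of_nat {0..3} UNIV"
    by (rule bij_betw_byWitness[where f' = nat_of_klein]) (auto simp: nat_of_klein_of_nat nat_of_klein_le)
  moreover have "bij_betw \<pi> UNIV UNIV"
    using assms(1) by (simp add: bij_betw_def finite_UNIV_inj_surj)
  ultimately have "bij_betw (\<pi> \<circ> klein_of_nat) {0..3} UNIV"
    by (rule bij_betw_trans)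
  then have "bij_betw (nat_of_klein \<circ> (\<pi> \<circ> klein_of_nat)) {0..3} {0..3}"
    using bij_betw_nat_of_klein by (rule bij_betw_trans)
  then have "bij_betw p {0..3} {0..3}"
    by (rule iffD1[OF bij_betw_cong, rotated]) (simp add: p_def)
  then have "p permutes {0..3}"
    by (rule bij_imp_permutes) (simp add: p_def)
  then show "p permutes {1..3}"
    by (rule permutes_superset) (auto simp: p_def assms(2) Suc_le_eq)
  show "klein_perm p = \<pi>"
    by (rule ext) (simp add: klein_perm_def p_def nat_of_klein_of_nat nat_of_klein_le)
qed

lemma three_points_not_covered:
  assumes "distinct [x, y, z]" and cover: "\<And>u. u \<in> {x, y, z} \<Longrightarrow> P u \<or> Q u"
    and P: "\<And>u v. u \<in> {x, y, z} \<Longrightarrow> v \<in> {x, y, z} \<Longrightarrow> P u \<Longrightarrow> P v \<Longrightarrow> u = v"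
    and Q: "\<And>u v. u \<in> {x, y, z} \<Longrightarrow> v \<in> {x, y, z} \<Longrightarrow> Q u \<Longrightarrow> Q v \<Longrightarrow> u = v"
  shows False
proof -
  have mem: "x \<in> {x, y, z}" "y \<in> {x, y, z}" "z \<in> {x, y, z}"
    by simp_all
  have ne: "x \<noteq> y" "x \<noteq> z" "y \<noteq> z"
    using assms(1) by simp_all
  consider "P x" | "Q x"
    using cover[OF mem(1)] by blast
  then show False
  proof cases
    case 1
    then have "Q y" "Q z"
      using cover[OF mem(2)] cover[OF mem(3)] P[OF mem(1) mem(2)] P[OF mem(1) mem(3)] ne by blast+
    then show False
      using Q[OF mem(2) mem(3)] ne by blast
  next
    case 2
    then have "P y" "P z"
      using cover[OF mem(2)] cover[OF mem(3)] Q[OF mem(1) mem(2)] Q[OF mem(1) mem(3)] ne by blast+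
    then show False
      using P[OF mem(2) mem(3)] ne by blast
  qed
qed

lemma (in group) odd_order_square_eq_one:
  assumes "odd (order G)" and x: "x \<in> carrier G" and "x \<otimes> x = \<one>"
  shows "x = \<one>"
proof -
  have "x [^] (2::nat) = \<one>"
    using assms by (simp add: numeral_2_eq_2)
  then have "ord x dvd 2"
    using pow_eq_id x by blast
  moreover have "ord x dvd order G"
    using x by (rule ord_dvd_group_order)
  ultimately have "ord x dvd gcd 2 (order G)"
    by (rule gcd_greatest)
  then have "ord x = 1"
    using \<open>odd (order G)\<close> by (metis coprime_iff_gcd_eq_1 coprime_left_2_iff_odd nat_dvd_1_iff_1)
  then show ?thesis
    using ord_eq_1 x by blast
qed

lemma (in group) odd_order_inv_eq_self:
  "odd (order G) \<Longrightarrow> x \<in> carrier G \<Longrightarrow> inv x = x \<Longrightarrow> x = \<one>"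
  by (metis odd_order_square_eq_one r_inv)

lemma (in comm_group) odd_order_square_inj:
  assumes odd: "odd (order G)" and xy: "x \<in> carrier G" "y \<in> carrier G" and eq: "x \<otimes> x = y \<otimes> y"
  shows "x = y"
proof -
  have "(x \<otimes> inv y) \<otimes> (x \<otimes> inv y) = (x \<otimes> x) \<otimes> inv (y \<otimes> y)"
    using xy by (simp add: m_ac inv_mult)
  also have "\<dots> = \<one>"
    using xy eq by simp
  finally have "(x \<otimes> inv y) \<otimes> (x \<otimes> inv y) = \<one>" .
  then have "x \<otimes> inv y = \<one>"
    by (rule odd_order_square_eq_one[OF odd m_closed[OF xy(1) inv_closed[OF xy(2)]]])
  then have "inv (inv y) = x"
    using xy by (intro inv_equality) simp_all
  then show ?thesis
    using xy by simp
qed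

lemma (in comm_group) inv_mult_cancel:
  "t \<in> carrier G \<Longrightarrow> a \<in> carrier G \<Longrightarrow> b \<in> carrier G \<Longrightarrow> inv (t \<otimes> a) \<otimes> (t \<otimes> b) = inv a \<otimes> b"
  by (simp add: inv_mult m_ac)

lemma (in group) auto_imp_group_hom: "\<phi> \<in> auto G \<Longrightarrow> group_hom G G \<phi>"
  by (simp add: auto_def group_hom_def group_hom_axioms_def is_group)

lemma (in group) auto_eq_one_iff:
  assumes "\<phi> \<in> auto G" and "x \<in> carrier G"
  shows "\<phi> x = \<one> \<longleftrightarrow> x = \<one>"
proof -
  interpret \<phi>: group_hom G G \<phi> using assms(1) by (rule auto_imp_group_hom)
  have "inj_on \<phi> (carrier G)"
    using assms(1) by (simp add: auto_def Bij_def bij_betw_def)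
  then show ?thesis
    using assms(2) inj_onD[of \<phi> "carrier G" x \<one>] by auto
qed

lemma (in group) auto_bij_betw: "\<phi> \<in> auto G \<Longrightarrow> bij_betw \<phi> (carrier G) (carrier G)"
  by (simp add: auto_def Bij_def)

lemma L_loop_carrier [simp]: "carrier (L_loop M) = UNIV \<times> carrier M"
  by (simp add: L_loop_def)

lemma L_loop_mult [simp]: "(A, x) \<otimes>\<^bsub>L_loop M\<^esub> (B, y) =
    (klein_mult A B, if B = K1 then x \<otimes>\<^bsub>M\<^esub> y else inv\<^bsub>M\<^esub> x \<otimes>\<^bsub>M\<^esub> y)"
  by (simp add: L_loop_def)

definition L_half_auto_of :: "('a, 'b) monoid_scheme \<Rightarrow> int \<Rightarrow> (nat \<Rightarrow> nat) \<Rightarrow> ('a \<Rightarrow> 'a)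
    \<Rightarrow> klein \<times> 'a \<Rightarrow> klein \<times> 'a" where
  "L_half_auto_of M e p \<phi> = (\<lambda>(A, x). if x \<in> carrier M
     then (klein_perm p A, if e = 1 \<and> A \<noteq> K1 then inv\<^bsub>M\<^esub> (\<phi> x) else \<phi> x) else undefined)"

lemma L_half_auto_of_apply [simp]: "x \<in> carrier M \<Longrightarrow> L_half_auto_of M e p \<phi> (A, x) =
    (klein_perm p A, if e = 1 \<and> A \<noteq> K1 then inv\<^bsub>M\<^esub> (\<phi> x) else \<phi> x)"
  by (simp add: L_half_auto_of_def)

context group
begin

lemma L_half_auto_of_Bij:
  assumes "finite (carrier G)" and p: "p permutes {1..3}" and \<phi>: "\<phi> \<in> auto G"
  shows "L_half_auto_of G e p \<phi> \<in> Bij (carrier (L_loop G))"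
proof -
  interpret \<phi>: group_hom G G \<phi> using \<phi> by (rule auto_imp_group_hom)
  let ?f = "L_half_auto_of G e p \<phi>"
  have "inj_on ?f (UNIV \<times> carrier G)"
  proof (rule inj_onI, clarify)
    fix A x B y assume x: "x \<in> carrier G" and y: "y \<in> carrier G" and eq: "?f (A, x) = ?f (B, y)"
    then have "A = B"
      using inj_klein_perm[OF p] by (simp add: inj_eq)
    with eq x y have "\<phi> x = \<phi> y"
      by (auto split: if_splits)
    then show "A = B \<and> x = y"
      using \<open>A = B\<close> x y bij_betw_imp_inj_on[OF auto_bij_betw[OF \<phi>]] by (simp add: inj_on_eq_iff)
  qed
  moreover have "?f ` (UNIV \<times> carrier G) \<subseteq> UNIV \<times> carrier G"
    by auto
  ultimately have "bij_betw ?f (UNIV \<times> carrier G) (UNIV \<times> carrier G)"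
    using assms(1) by (simp add: bij_betw_def endo_inj_surj finite_cartesian_product)
  moreover have "?f \<in> extensional (UNIV \<times> carrier G)"
    by (auto simp: extensional_def L_half_auto_of_def)
  ultimately show ?thesis
    by (simp add: Bij_def)
qed

lemma L_half_auto_of_mult:
  assumes "e \<noteq> 1" and p: "p permutes {1..3}" and \<phi>: "\<phi> \<in> auto G"
    and "P \<in> carrier (L_loop G)" and "Q \<in> carrier (L_loop G)"
  shows "L_half_auto_of G e p \<phi> (P \<otimes>\<^bsub>L_loop G\<^esub> Q)
    = L_half_auto_of G e p \<phi> P \<otimes>\<^bsub>L_loop G\<^esub> L_half_auto_of G e p \<phi> Q"
proof -
  interpret \<phi>: group_hom G G \<phi> using \<phi> by (rule auto_imp_group_hom)
  show ?thesis
    using assms klein_perm_mult[OF p] by auto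
qed

end

context comm_group
begin

lemma L_half_auto_of_half_mult:
  assumes p: "p permutes {1..3}" and \<phi>: "\<phi> \<in> auto G"
    and "P \<in> carrier (L_loop G)" and "Q \<in> carrier (L_loop G)"
  shows "L_half_auto_of G e p \<phi> (P \<otimes>\<^bsub>L_loop G\<^esub> Q)
      = L_half_auto_of G e p \<phi> P \<otimes>\<^bsub>L_loop G\<^esub> L_half_auto_of G e p \<phi> Q
    \<or> L_half_auto_of G e p \<phi> (P \<otimes>\<^bsub>L_loop G\<^esub> Q)
      = L_half_auto_of G e p \<phi> Q \<otimes>\<^bsub>L_loop G\<^esub> L_half_auto_of G e p \<phi> P"
proof (cases "e = 1")
  case False
  then show ?thesis using L_half_auto_of_mult assms by blast
next
  case True
  then have e: "e = 1" .
  interpret \<phi>: group_hom G G \<phi> using \<phi> by (rule auto_imp_group_hom)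
  obtain A x B y where P: "P = (A, x)" and Q: "Q = (B, y)" and x: "x \<in> carrier G" and y: "y \<in> carrier G"
    using assms by auto
  note perm_mult = klein_perm_mult[OF p, of A B]
  note perm_K1 = klein_perm_eq_K1_iff[OF p] klein_perm_K1[OF p]
  show ?thesis
  proof (cases "distinct [K1, A, B]")
    case True
    then have "A \<noteq> K1" "B \<noteq> K1" "klein_mult A B \<noteq> K1"
      by (auto simp: klein_mult_eq_K1_iff)
    then show ?thesis
      using x y e by (intro disjI1) (simp add: P Q perm_mult perm_K1 inv_mult)
  next
    case False
    have perm_mult': "klein_perm p (klein_mult A B) = klein_mult (klein_perm p B) (klein_perm p A)"
      by (simp add: perm_mult klein_mult_commute)
    show ?thesis
      using False x y e
      by (intro disjI2, cases "A = K1"; cases "B = K1") (simp_all add: P Q perm_mult' perm_K1 inv_mult m_comm)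
  qed
qed

end

lemma (in group) L_half_auto_of_in_auto:
  assumes "finite (carrier G)" and "p permutes {1..3}" and "\<phi> \<in> auto G" and "e \<noteq> 1"
  shows "L_half_auto_of G e p \<phi> \<in> auto (L_loop G)"
  using L_half_auto_of_Bij[OF assms(1-3)] L_half_auto_of_mult[OF assms(4,2,3)] Bij_imp_funcset
  unfolding auto_def hom_def by blast

lemma (in comm_group) L_half_auto_of_in_half_auto:
  assumes "finite (carrier G)" and "p permutes {1..3}" and "\<phi> \<in> auto G"
  shows "L_half_auto_of G e p \<phi> \<in> half_auto (L_loop G)"
  using L_half_auto_of_Bij[OF assms] L_half_auto_of_half_mult[OF assms(2,3)]
  unfolding half_auto_def by blast

lemma (in group) L_half_auto_of_compose:
  assumes q: "q permutes {1..3}" and \<phi>: "\<phi> \<in> auto G" and \<psi>: "\<psi> \<in> auto G"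
    and "e \<in> {0, 1}" and "e' \<in> {0, 1}"
  shows "compose (carrier (L_loop G)) (L_half_auto_of G e p \<phi>) (L_half_auto_of G e' q \<psi>)
    = L_half_auto_of G ((e + e') mod 2) (p \<circ> q) (compose (carrier G) \<phi> \<psi>)"
proof
  interpret \<phi>: group_hom G G \<phi> using \<phi> by (rule auto_imp_group_hom)
  interpret \<psi>: group_hom G G \<psi> using \<psi> by (rule auto_imp_group_hom)
  fix P :: "klein \<times> 'a"
  obtain A x where P: "P = (A, x)" by fastforce
  show "compose (carrier (L_loop G)) (L_half_auto_of G e p \<phi>) (L_half_auto_of G e' q \<psi>) P
    = L_half_auto_of G ((e + e') mod 2) (p \<circ> q) (compose (carrier G) \<phi> \<psi>) P"
    using assms klein_perm_eq_K1_iff[OF q]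
    by (cases "x \<in> carrier G") (auto simp: P compose_def klein_perm_compose L_half_auto_of_def)
qed

locale nontrivial_odd_comm_group = comm_group G for G (structure) +
  assumes finite_carrier: "finite (carrier G)"
    and odd_order: "odd (order G)"
    and nontrivial: "carrier G \<noteq> {\<one>}"
begin

lemmas square_eq_one = odd_order_square_eq_one[OF odd_order]
lemmas inv_eq_self = odd_order_inv_eq_self[OF odd_order]
lemmas square_inj = odd_order_square_inj[OF odd_order]

lemma obtain_nonunit:
  obtains w where "w \<in> carrier G" and "w \<noteq> \<one>"
  using nontrivial one_closed by blast

lemma three_nonunits_distinct:
  assumes "w \<in> carrier G" and "w \<noteq> \<one>"
  shows "distinct [\<one>, w, inv w]"
proof -
  have "inv w \<noteq> \<one>"
    using assms by simp
  moreover have "inv w \<noteq> w"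
    using inv_eq_self[OF assms(1)] assms(2) by blast
  ultimately show ?thesis
    using assms(2) by auto
qed

lemma L_half_auto_of_inject:
  assumes p: "p permutes {1..3}" and q: "q permutes {1..3}" and \<phi>: "\<phi> \<in> auto G" and \<psi>: "\<psi> \<in> auto G"
    and e: "e \<in> {0, 1}" and e': "e' \<in> {0, 1}"
    and eq: "L_half_auto_of G e p \<phi> = L_half_auto_of G e' q \<psi>"
  shows "e = e' \<and> p = q \<and> \<phi> = \<psi>"
proof (intro conjI)
  have at: "L_half_auto_of G e p \<phi> (A, x) = L_half_auto_of G e' q \<psi> (A, x)" for A x
    using fun_cong[OF eq] .
  have "klein_perm p A = klein_perm q A" for A
    using arg_cong[OF at[of A \<one>], of fst] by simp
  then show "p = q"
    by (intro klein_perm_inject[OF p q] ext)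
  show "\<phi> = \<psi>"
  proof
    fix x show "\<phi> x = \<psi> x"
    proof (cases "x \<in> carrier G")
      case True
      have "\<phi> x = snd (L_half_auto_of G e p \<phi> (K1, x))"
        using True by simp
      also have "\<dots> = snd (L_half_auto_of G e' q \<psi> (K1, x))"
        by (simp only: at)
      also have "\<dots> = \<psi> x"
        using True by simp
      finally show ?thesis .
    next
      case False
      have "\<phi> \<in> extensional (carrier G)" "\<psi> \<in> extensional (carrier G)"
        using \<phi> \<psi> Bij_imp_extensional unfolding auto_def by blast+
      then show ?thesis
        using extensional_arb[OF _ False] by metis
    qed
  qed
  obtain w where w: "w \<in> carrier G" "w \<noteq> \<one>"
    by (rule obtain_nonunit)
  have "inv (\<phi> w) \<noteq> \<phi> w"
    using inv_eq_self[of "\<phi> w"] auto_eq_one_iff[OF \<phi> w(1)] auto_imp_group_hom[OF \<phi>] w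
    by (auto simp: group_hom.hom_closed)
  then have "e = 1 \<longleftrightarrow> e' = 1"
    using at[of Ka w] w by (auto simp: \<open>\<phi> = \<psi>\<close> split: if_splits)
  then show "e = e'"
    using e e' by auto
qed

lemma L_half_auto_of_in_auto_iff:
  assumes p: "p permutes {1..3}" and \<phi>: "\<phi> \<in> auto G" and e: "e \<in> {0, 1}"
  shows "L_half_auto_of G e p \<phi> \<in> auto (L_loop G) \<longleftrightarrow> e = 0"
proof
  assume auto: "L_half_auto_of G e p \<phi> \<in> auto (L_loop G)"
  obtain w where w: "w \<in> carrier G" "w \<noteq> \<one>"
    by (rule obtain_nonunit)
  have "L_half_auto_of G e p \<phi> ((Ka, \<one>) \<otimes>\<^bsub>L_loop G\<^esub> (K1, w))
      = L_half_auto_of G e p \<phi> (Ka, \<one>) \<otimes>\<^bsub>L_loop G\<^esub> L_half_auto_of G e p \<phi> (K1, w)"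
    using auto w by (intro hom_mult) (auto simp: auto_def)
  then have "e = 1 \<Longrightarrow> inv (\<phi> w) = \<phi> w"
    using w p auto_imp_group_hom[OF \<phi>] by (simp add: group_hom.hom_one group_hom.hom_closed)
  moreover have "inv (\<phi> w) \<noteq> \<phi> w"
    using inv_eq_self[of "\<phi> w"] auto_eq_one_iff[OF \<phi> w(1)] auto_imp_group_hom[OF \<phi>] w
    by (auto simp: group_hom.hom_closed)
  ultimately show "e = 0"
    using e by auto
next
  assume "e = 0"
  then show "L_half_auto_of G e p \<phi> \<in> auto (L_loop G)"
    using L_half_auto_of_in_auto[OF finite_carrier p \<phi>] by simp
qed

end

locale L_half_automorphism = nontrivial_odd_comm_group +
  fixes f
  assumes half_auto: "f \<in> half_auto (L_loop G)"
begin

definition fK :: "klein \<Rightarrow> 'a \<Rightarrow> klein" where "fK A x = fst (f (A, x))"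
definition fM :: "klein \<Rightarrow> 'a \<Rightarrow> 'a" where "fM A x = snd (f (A, x))"

lemma f_pair: "f (A, x) = (fK A x, fM A x)"
  by (simp add: fK_def fM_def)

lemma f_bij: "bij_betw f (UNIV \<times> carrier G) (UNIV \<times> carrier G)"
  using half_auto by (simp add: half_auto_def Bij_def)

lemma fM_closed: "x \<in> carrier G \<Longrightarrow> fM A x \<in> carrier G"
  using bij_betw_apply[OF f_bij, of "(A, x)"] by (simp add: f_pair)

lemma f_inject: "x \<in> carrier G \<Longrightarrow> y \<in> carrier G \<Longrightarrow> f (A, x) = f (B, y) \<Longrightarrow> A = B \<and> x = y"
  using inj_onD[OF bij_betw_imp_inj_on[OF f_bij], of "(A, x)" "(B, y)"] by simp

lemma f_mult:
  assumes "x \<in> carrier G" and "y \<in> carrier G"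
  shows "f ((A, x) \<otimes>\<^bsub>L_loop G\<^esub> (B, y))
      \<in> {f (A, x) \<otimes>\<^bsub>L_loop G\<^esub> f (B, y), f (B, y) \<otimes>\<^bsub>L_loop G\<^esub> f (A, x)}"
proof -
  have half: "\<forall>P\<in>carrier (L_loop G). \<forall>Q\<in>carrier (L_loop G). f (P \<otimes>\<^bsub>L_loop G\<^esub> Q) = f P \<otimes>\<^bsub>L_loop G\<^esub> f Q
      \<or> f (P \<otimes>\<^bsub>L_loop G\<^esub> Q) = f Q \<otimes>\<^bsub>L_loop G\<^esub> f P"
    using half_auto unfolding half_auto_def mem_Collect_eq by (rule conjunct2)
  have mem: "(A, x) \<in> carrier (L_loop G)" "(B, y) \<in> carrier (L_loop G)"
    using assms by simp_all
  show ?thesis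
    using bspec[OF bspec[OF half mem(1)] mem(2)] by blast
qed

lemma fK_mult:
  assumes "x \<in> carrier G" and "y \<in> carrier G"
  shows "fK (klein_mult A B) (if B = K1 then x \<otimes> y else inv x \<otimes> y) = klein_mult (fK A x) (fK B y)"
  using f_mult[OF assms, of A B] by (auto simp: f_pair klein_mult_commute)

lemma fM_mult:
  assumes "x \<in> carrier G" and "y \<in> carrier G"
  shows "fM (klein_mult A B) (if B = K1 then x \<otimes> y else inv x \<otimes> y)
      \<in> {if fK B y = K1 then fM A x \<otimes> fM B y else inv (fM A x) \<otimes> fM B y,
         if fK A x = K1 then fM B y \<otimes> fM A x else inv (fM B y) \<otimes> fM A x}"
  using f_mult[OF assms, of A B] by (auto simp: f_pair klein_mult_commute)

lemma f_one: "f (K1, \<one>) = (K1, \<one>)"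
proof -
  have "fK K1 \<one> = K1"
    using fK_mult[of \<one> \<one> K1 K1] by simp
  moreover from this have "fM K1 \<one> = fM K1 \<one> \<otimes> fM K1 \<one>"
    using fM_mult[of \<one> \<one> K1 K1] by simp
  then have "fM K1 \<one> = \<one>"
    using fM_closed[of \<one> K1] by simp
  ultimately show ?thesis by (simp add: f_pair)
qed

lemma fK_ne_K1:
  assumes "A \<noteq> K1" and x: "x \<in> carrier G"
  shows "fK A x \<noteq> K1"
proof
  assume K1: "fK A x = K1"
  have "fM K1 \<one> = fM A x \<otimes> fM A x"
    using fM_mult[OF x x, of A A] K1 assms by simp
  then have "fM A x \<otimes> fM A x = \<one>"
    using f_one by (simp add: f_pair)
  then have "fM A x = \<one>"
    by (rule square_eq_one[OF fM_closed[OF x]])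
  then have "f (A, x) = f (K1, \<one>)"
    using K1 f_one by (simp add: f_pair)
  then show False
    using f_inject x assms(1) by blast
qed

lemma fK_K1:
  assumes x: "x \<in> carrier G"
  shows "fK K1 x = K1"
proof (rule ccontr)
  assume ne: "fK K1 x \<noteq> K1"
  have "f (K1, x \<otimes> x) = (K1, \<one>)"
    using fK_mult[OF x x, of K1 K1] fM_mult[OF x x, of K1 K1] ne fM_closed[OF x]
    by (simp add: f_pair)
  then have "x \<otimes> x = \<one>"
    using f_inject[of "x \<otimes> x" \<one> K1 K1] f_one x by simp
  then have "x = \<one>"
    by (rule square_eq_one[OF x])
  then show False
    using ne f_one by (simp add: f_pair)
qed

definition phi :: "'a \<Rightarrow> 'a" where "phi = restrict (fM K1) (carrier G)"

lemma f_K1: "x \<in> carrier G \<Longrightarrow> f (K1, x) = (K1, phi x)"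
  by (simp add: f_pair fK_K1 phi_def)

lemma phi_auto: "phi \<in> auto G"
proof -
  have closed: "phi \<in> carrier G \<rightarrow> carrier G"
    by (simp add: phi_def fM_closed)
  have "phi (x \<otimes> y) = phi x \<otimes> phi y" if "x \<in> carrier G" "y \<in> carrier G" for x y
    using fM_mult[OF that, of K1 K1] that fM_closed that by (auto simp: phi_def fK_K1 m_comm)
  then have "phi \<in> hom G G"
    using closed by (simp add: hom_def)
  moreover have "inj_on phi (carrier G)"
    using f_inject by (intro inj_onI) (metis f_K1)
  then have "bij_betw phi (carrier G) (carrier G)"
    using closed finite_carrier by (simp add: bij_betw_def endo_inj_surj funcset_image)
  then have "phi \<in> Bij (carrier G)"
    by (simp add: Bij_def phi_def)
  ultimately show ?thesis
    by (simp add: auto_def)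
qed

lemma phi_closed: "x \<in> carrier G \<Longrightarrow> phi x \<in> carrier G"
  by (simp add: phi_def fM_closed)

lemma phi_inv: "x \<in> carrier G \<Longrightarrow> phi (inv x) = inv (phi x)"
  using group_hom.hom_inv[OF auto_imp_group_hom[OF phi_auto]] .

lemma phi_mult: "x \<in> carrier G \<Longrightarrow> y \<in> carrier G \<Longrightarrow> phi (x \<otimes> y) = phi x \<otimes> phi y"
  using group_hom.hom_mult[OF auto_imp_group_hom[OF phi_auto]] .

lemma phi_eq_one_iff: "x \<in> carrier G \<Longrightarrow> phi x = \<one> \<longleftrightarrow> x = \<one>"
  by (rule auto_eq_one_iff[OF phi_auto])

lemma phi_one: "phi \<one> = \<one>"
  by (simp add: phi_eq_one_iff)

lemma phi_square_inject:
  assumes "x \<in> carrier G" and "y \<in> carrier G" and "phi x \<otimes> phi x = phi y \<otimes> phi y"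
  shows "x = y"
proof -
  have "phi x = phi y"
    using assms(3) by (rule square_inj[OF phi_closed[OF assms(1)] phi_closed[OF assms(2)]])
  then show ?thesis
    using assms(1,2) bij_betw_imp_inj_on[OF auto_bij_betw[OF phi_auto]] by (simp add: inj_on_eq_iff)
qed

definition perm :: "klein \<Rightarrow> klein" where "perm A = fK A \<one>"
definition shift :: "klein \<Rightarrow> 'a" where "shift A = fM A \<one>"

lemma shift_closed: "shift A \<in> carrier G"
  by (simp add: shift_def fM_closed)

text \<open>From \<open>(A, x) = (A, \<one>) (K1, x)\<close>.\<close>

lemma f_nonK1_cases:
  assumes A: "A \<noteq> K1" and x: "x \<in> carrier G"
  shows "fK A x = perm A" and "fM A x = shift A \<otimes> phi x \<or> fM A x = shift A \<otimes> inv (phi x)"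
proof -
  show "fK A x = perm A"
    using fK_mult[OF one_closed x, of A K1] fK_K1[OF x] x by (simp add: perm_def)
  show "fM A x = shift A \<otimes> phi x \<or> fM A x = shift A \<otimes> inv (phi x)"
    using fM_mult[OF one_closed x, of A K1] fK_ne_K1[OF A one_closed] f_K1[OF x] x
      shift_closed phi_closed[OF x]
    by (auto simp: f_pair shift_def m_comm)
qed

lemma perm_mult: "perm (klein_mult A B) = klein_mult (perm A) (perm B)"
  using fK_mult[OF one_closed one_closed, of A B] by (simp add: perm_def split: if_splits)

lemma inj_perm: "inj perm"
proof (rule injI)
  fix A B assume "perm A = perm B"
  then have "perm (klein_mult A B) = K1"
    by (simp add: perm_mult)
  then show "A = B"
    using fK_ne_K1[OF _ one_closed] by (metis klein_mult_eq_K1_iff perm_def)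
qed

lemma perm_K1: "perm K1 = K1"
  using f_one by (simp add: perm_def f_pair)

lemma fM_signs_agree:
  assumes A: "A \<noteq> K1" and x: "x \<in> carrier G" and y: "y \<in> carrier G"
    and "fM A x = shift A \<otimes> phi x" and "fM A y = shift A \<otimes> inv (phi y)"
  shows "phi x = \<one> \<or> phi y = \<one>"
proof -
  have "phi (inv x \<otimes> y) \<in> {inv (fM A x) \<otimes> fM A y, inv (fM A y) \<otimes> fM A x}"
    using fM_mult[OF x y, of A A] fK_ne_K1[OF A] x y f_K1[of "inv x \<otimes> y"] A by (simp add: f_pair)
  then have "inv (phi x) \<otimes> phi y \<in> {inv (phi x) \<otimes> inv (phi y), phi y \<otimes> phi x}"
    using assms shift_closed phi_closed[OF x] phi_closed[OF y]
    by (simp add: phi_mult phi_inv inv_mult_cancel)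
  then consider "inv (phi x) \<otimes> phi y = inv (phi x) \<otimes> inv (phi y)"
    | "inv (phi x) \<otimes> phi y = phi x \<otimes> phi y"
    using phi_closed[OF x] phi_closed[OF y] m_comm[of "phi y" "phi x"] by auto
  then show ?thesis
  proof cases
    case 1
    then have "inv (phi y) = phi y"
      using phi_closed[OF x] phi_closed[OF y] by simp
    then show ?thesis
      using inv_eq_self[OF phi_closed[OF y]] by blast
  next
    case 2
    then have "inv (phi x) = phi x"
      using phi_closed[OF x] phi_closed[OF y] by simp
    then show ?thesis
      using inv_eq_self[OF phi_closed[OF x]] by blast
  qed
qed

definition inverting :: "klein \<Rightarrow> bool" where
  "inverting A \<longleftrightarrow> (\<exists>x\<in>carrier G. fM A x \<noteq> shift A \<otimes> phi x)"

lemma fM_nonK1: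
  assumes A: "A \<noteq> K1" and x: "x \<in> carrier G"
  shows "fM A x = shift A \<otimes> (if inverting A then inv (phi x) else phi x)"
proof (cases "inverting A")
  case True
  then obtain x0 where x0: "x0 \<in> carrier G" and ne: "fM A x0 \<noteq> shift A \<otimes> phi x0"
    unfolding inverting_def by blast
  then have x0_inv: "fM A x0 = shift A \<otimes> inv (phi x0)"
    using f_nonK1_cases(2)[OF A x0] by blast
  with ne have "phi x0 \<noteq> \<one>"
    by auto
  then have "fM A x = shift A \<otimes> inv (phi x)"
    using f_nonK1_cases(2)[OF A x] fM_signs_agree[OF A x x0 _ x0_inv] by auto
  then show ?thesis
    using True by simp
qed (use x in \<open>simp add: inverting_def\<close>)

text \<open>Compare \<open>f((A, x)(B, x)) = f(AB, \<one>)\<close> for all \<open>x\<close>: with opposite signs, both alternatives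
  depend on \<open>x\<close> through the injective map \<open>x \<mapsto> phi x \<otimes> phi x\<close>, so they cannot produce the constant
  \<open>shift (AB)\<close> for three different \<open>x\<close>.\<close>

lemma inverting_if_inverting:
  assumes AB: "distinct [K1, A, B]" and "inverting B"
  shows "inverting A"
proof (rule ccontr)
  assume "\<not> inverting A"
  have A: "A \<noteq> K1" and B: "B \<noteq> K1"
    using AB by auto
  let ?C = "klein_mult A B"
  define \<alpha> where "\<alpha> = inv (shift A) \<otimes> shift B"
  define \<beta> where "\<beta> = inv (shift B) \<otimes> shift A"
  have \<alpha>\<beta>: "\<alpha> \<in> carrier G" "\<beta> \<in> carrier G"
    by (simp_all add: \<alpha>_def \<beta>_def shift_closed)
  have cover: "shift ?C = \<alpha> \<otimes> inv (phi x \<otimes> phi x) \<or> shift ?C = \<beta> \<otimes> (phi x \<otimes> phi x)"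
    if x: "x \<in> carrier G" for x
  proof -
    have fA: "fM A x = shift A \<otimes> phi x" and fB: "fM B x = shift B \<otimes> inv (phi x)"
      using fM_nonK1[OF A x] fM_nonK1[OF B x] \<open>inverting B\<close> \<open>\<not> inverting A\<close> by simp_all
    have "shift ?C \<in> {inv (fM A x) \<otimes> fM B x, inv (fM B x) \<otimes> fM A x}"
      using fM_mult[OF x x, of A B] fK_ne_K1[OF A x] fK_ne_K1[OF B x] B x by (simp add: shift_def)
    moreover have "inv (fM A x) \<otimes> fM B x = \<alpha> \<otimes> inv (phi x \<otimes> phi x)"
      using phi_closed[OF x] shift_closed by (simp add: fA fB \<alpha>_def inv_mult m_ac)
    moreover have "inv (fM B x) \<otimes> fM A x = \<beta> \<otimes> (phi x \<otimes> phi x)"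
      using phi_closed[OF x] shift_closed by (simp add: fA fB \<beta>_def inv_mult m_ac)
    ultimately show ?thesis
      by simp
  qed
  obtain w where w: "w \<in> carrier G" "w \<noteq> \<one>"
    by (rule obtain_nonunit)
  show False
  proof (rule three_points_not_covered[OF three_nonunits_distinct[OF w]])
    let ?P = "\<lambda>x. shift ?C = \<alpha> \<otimes> inv (phi x \<otimes> phi x)"
    let ?Q = "\<lambda>x. shift ?C = \<beta> \<otimes> (phi x \<otimes> phi x)"
    have S: "{\<one>, w, inv w} \<subseteq> carrier G"
      using w by simp
    show "?P u \<or> ?Q u" if "u \<in> {\<one>, w, inv w}" for u
      using cover S that by blast
    show "u = v" if "u \<in> {\<one>, w, inv w}" "v \<in> {\<one>, w, inv w}" "?P u" "?P v" for u v
    proof -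
      have uv: "u \<in> carrier G" "v \<in> carrier G"
        using that(1,2) S by auto
      then have "inv (phi u \<otimes> phi u) = inv (phi v \<otimes> phi v)"
        using that(3,4) \<alpha>\<beta> phi_closed by simp
      then have "phi u \<otimes> phi u = phi v \<otimes> phi v"
        using uv phi_closed by (metis inv_inv m_closed)
      then show ?thesis
        by (rule phi_square_inject[OF uv])
    qed
    show "u = v" if "u \<in> {\<one>, w, inv w}" "v \<in> {\<one>, w, inv w}" "?Q u" "?Q v" for u v
    proof -
      have uv: "u \<in> carrier G" "v \<in> carrier G"
        using that(1,2) S by auto
      then have "phi u \<otimes> phi u = phi v \<otimes> phi v"
        using that(3,4) \<alpha>\<beta> phi_closed by simp
      then show ?thesis
        by (rule phi_square_inject[OF uv])
    qed
  qed
qed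

lemma inverting_eq:
  assumes "A \<noteq> K1" and "B \<noteq> K1"
  shows "inverting A = inverting B"
  using assms inverting_if_inverting[of A B] inverting_if_inverting[of B A] by (cases "A = B") auto

text \<open>Compare \<open>f((A, x)(B, \<one>)) = f(AB, x\<inverse>)\<close> at \<open>x = \<one>\<close> and at \<open>x = w \<noteq> \<one>\<close>: if the claim
  failed, both would have to be the other alternative, forcing \<open>\<sigma>(w)\<^sup>2 = \<one>\<close>.\<close>

lemma shift_mult:
  assumes AB: "distinct [K1, A, B]"
  shows "shift (klein_mult A B) = inv (shift A) \<otimes> shift B"
proof (rule ccontr)
  assume ne: "shift (klein_mult A B) \<noteq> inv (shift A) \<otimes> shift B"
  have A: "A \<noteq> K1" and B: "B \<noteq> K1"
    using AB by auto
  let ?C = "klein_mult A B"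
  have C: "?C \<noteq> K1"
    using AB by (simp add: klein_mult_eq_K1_iff)
  define \<sigma> where "\<sigma> x = (if inverting A then inv (phi x) else phi x)" for x
  have \<sigma>: "\<sigma> x \<in> carrier G" if "x \<in> carrier G" for x
    using phi_closed[OF that] by (simp add: \<sigma>_def)
  have fM_eq: "fM D x = shift D \<otimes> \<sigma> x" if "D \<noteq> K1" "x \<in> carrier G" for D x
    using fM_nonK1[OF that] inverting_eq[OF that(1) A] by (simp add: \<sigma>_def)
  have shift_C: "shift ?C = inv (shift B) \<otimes> shift A \<otimes> (\<sigma> x \<otimes> \<sigma> x)" if x: "x \<in> carrier G" for x
  proof -
    note closed = shift_closed \<sigma>[OF x]
    have "fM ?C (inv x) \<in> {inv (fM A x) \<otimes> fM B \<one>, inv (fM B \<one>) \<otimes> fM A x}"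
      using fM_mult[OF x one_closed, of A B] fK_ne_K1[OF A x] fK_ne_K1[OF B one_closed] B x by simp
    moreover have "fM ?C (inv x) = shift ?C \<otimes> inv (\<sigma> x)"
      using fM_eq[OF C inv_closed[OF x]] x by (simp add: \<sigma>_def phi_inv phi_closed)
    moreover have "fM A x = shift A \<otimes> \<sigma> x" "fM B \<one> = shift B"
      using fM_eq[OF A x] by (simp_all add: shift_def)
    moreover have "inv (shift A \<otimes> \<sigma> x) \<otimes> shift B = (inv (shift A) \<otimes> shift B) \<otimes> inv (\<sigma> x)"
      using closed by (simp add: inv_mult m_ac)
    ultimately consider
        "shift ?C \<otimes> inv (\<sigma> x) = (inv (shift A) \<otimes> shift B) \<otimes> inv (\<sigma> x)"
      | "shift ?C \<otimes> inv (\<sigma> x) = inv (shift B) \<otimes> (shift A \<otimes> \<sigma> x)"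
      by auto
    then show ?thesis
    proof cases
      case 1
      then show ?thesis using ne closed by simp
    next
      case 2
      have "shift ?C = (shift ?C \<otimes> inv (\<sigma> x)) \<otimes> \<sigma> x"
        using closed by (simp add: m_assoc)
      also have "\<dots> = inv (shift B) \<otimes> shift A \<otimes> (\<sigma> x \<otimes> \<sigma> x)"
        using 2 closed by (simp add: m_assoc)
      finally show ?thesis .
    qed
  qed
  obtain w where w: "w \<in> carrier G" "w \<noteq> \<one>"
    by (rule obtain_nonunit)
  have "\<sigma> \<one> = \<one>"
    by (simp add: \<sigma>_def phi_one)
  then have "\<sigma> w \<otimes> \<sigma> w = \<one>"
    using shift_C[OF w(1)] shift_C[OF one_closed] \<sigma>[OF w(1)] shift_closed by simp
  then have "\<sigma> w = \<one>"
    by (rule square_eq_one[OF \<sigma>[OF w(1)]])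
  then show False
    using w phi_eq_one_iff[OF w(1)] phi_closed[OF w(1)] by (simp add: \<sigma>_def split: if_splits)
qed

lemma shift_eq_one: "shift C = \<one>"
proof (cases "C = K1")
  case True
  then show ?thesis using f_one by (simp add: shift_def f_pair)
next
  case False
  then obtain A B where AB: "distinct [K1, A, B]" and C: "klein_mult A B = C"
    using klein_eq_mult_distinct by blast
  then have BA: "distinct [K1, B, A]" and C': "klein_mult B A = C"
    by (auto simp: klein_mult_commute)
  have "inv (shift C) = inv (inv (shift A) \<otimes> shift B)"
    using shift_mult[OF AB] C by simp
  also have "\<dots> = inv (shift B) \<otimes> shift A"
    using shift_closed by (simp add: inv_mult_group)
  also have "\<dots> = shift C"
    using shift_mult[OF BA] C' by simp
  finally show ?thesis
    using inv_eq_self[OF shift_closed] by blast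
qed

lemma f_eq_L_half_auto_of:
  obtains e p where "e \<in> {0, 1}" and "p permutes {1..3}" and "f = L_half_auto_of G e p phi"
proof -
  obtain p where p: "p permutes {1..3}" and perm: "klein_perm p = perm"
    using klein_perm_surj[OF inj_perm perm_K1] .
  define e :: int where "e = (if inverting Ka then 1 else 0)"
  have "f = L_half_auto_of G e p phi"
  proof
    fix P :: "klein \<times> 'a"
    obtain A x where P: "P = (A, x)" by fastforce
    show "f P = L_half_auto_of G e p phi P"
    proof (cases "x \<in> carrier G")
      case False
      have "f \<in> extensional (UNIV \<times> carrier G)"
        using half_auto by (simp add: half_auto_def Bij_def)
      then have "f P = undefined"
        by (rule extensional_arb) (simp add: P False)
      then show ?thesis
        using False by (simp add: P L_half_auto_of_def)
    next
      case x: True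
      show ?thesis
      proof (cases "A = K1")
        case True
        then show ?thesis
          using f_K1[OF x] x p by (simp add: P)
      next
        case A: False
        have "inverting A = inverting Ka"
          using inverting_eq[OF A] by simp
        then show ?thesis
          using f_nonK1_cases(1)[OF A x] fM_nonK1[OF A x] x A phi_closed[OF x]
          by (simp add: P f_pair e_def shift_eq_one perm)
      qed
    qed
  qed
  moreover have "e \<in> {0, 1}"
    by (simp add: e_def)
  ultimately show ?thesis
    using that p by blast
qed

end

lemma carrier_integer_mod_group_2: "carrier (integer_mod_group 2) = {0, 1}"
  by (auto simp: carrier_integer_mod_group)

lemma carrier_AutoGroup: "carrier (AutoGroup G) = auto G"
  by (simp add: AutoGroup_def BijGroup_def)

lemma mult_AutoGroup: "\<phi> \<in> auto G \<Longrightarrow> \<psi> \<in> auto G \<Longrightarrow> \<phi> \<otimes>\<^bsub>AutoGroup G\<^esub> \<psi> = compose (carrier G) \<phi> \<psi>"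
  by (simp add: AutoGroup_def BijGroup_def auto_def)

lemma carrier_HalfGroup: "carrier (HalfGroup G) = half_auto G"
  by (simp add: HalfGroup_def BijGroup_def)

lemma mult_HalfGroup: "f \<in> half_auto G \<Longrightarrow> g \<in> half_auto G \<Longrightarrow> f \<otimes>\<^bsub>HalfGroup G\<^esub> g = compose (carrier G) f g"
  by (simp add: HalfGroup_def BijGroup_def half_auto_def)

lemma auto_subset_half_auto: "auto G \<subseteq> half_auto G"
  by (auto simp: auto_def hom_def half_auto_def)

context nontrivial_odd_comm_group
begin

lemma half_auto_L_loop:
  "half_auto (L_loop G)
    = (\<lambda>(e, p, \<phi>). L_half_auto_of G e p \<phi>) ` ({0, 1} \<times> {p. p permutes {1..3}} \<times> auto G)"
proof
  show "half_auto (L_loop G) \<subseteq> (\<lambda>(e, p, \<phi>). L_half_auto_of G e p \<phi>) ` ({0, 1} \<times> {p. p permutes {1..3}} \<times> auto G)"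
  proof
    fix f assume "f \<in> half_auto (L_loop G)"
    then interpret L_half_automorphism G f
      by unfold_locales
    obtain e p where "e \<in> {0, 1}" and "p permutes {1..3}" and "f = L_half_auto_of G e p phi"
      by (rule f_eq_L_half_auto_of)
    then show "f \<in> (\<lambda>(e, p, \<phi>). L_half_auto_of G e p \<phi>) ` ({0, 1} \<times> {p. p permutes {1..3}} \<times> auto G)"
      using phi_auto by (intro image_eqI[of _ _ "(e, p, phi)"]) simp_all
  qed
  show "(\<lambda>(e, p, \<phi>). L_half_auto_of G e p \<phi>) ` ({0, 1} \<times> {p. p permutes {1..3}} \<times> auto G) \<subseteq> half_auto (L_loop G)"
    using L_half_auto_of_in_half_auto[OF finite_carrier] by auto
qed

lemma auto_L_loop:
  "auto (L_loop G) = (\<lambda>(p, \<phi>). L_half_auto_of G 0 p \<phi>) ` ({p. p permutes {1..3}} \<times> auto G)"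
proof
  show "auto (L_loop G) \<subseteq> (\<lambda>(p, \<phi>). L_half_auto_of G 0 p \<phi>) ` ({p. p permutes {1..3}} \<times> auto G)"
  proof
    fix f assume f: "f \<in> auto (L_loop G)"
    then have "f \<in> half_auto (L_loop G)"
      by (rule subsetD[OF auto_subset_half_auto])
    then obtain e p \<phi> where "e \<in> {0, 1}" "p permutes {1..3}" "\<phi> \<in> auto G" "f = L_half_auto_of G e p \<phi>"
      unfolding half_auto_L_loop by auto
    moreover from this have "e = 0"
      using L_half_auto_of_in_auto_iff f by simp
    ultimately show "f \<in> (\<lambda>(p, \<phi>). L_half_auto_of G 0 p \<phi>) ` ({p. p permutes {1..3}} \<times> auto G)"
      by (intro image_eqI[of _ _ "(p, \<phi>)"]) simp_all
  qed
  show "(\<lambda>(p, \<phi>). L_half_auto_of G 0 p \<phi>) ` ({p. p permutes {1..3}} \<times> auto G) \<subseteq> auto (L_loop G)"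
    using L_half_auto_of_in_auto[OF finite_carrier] by auto
qed

lemma L_loop_half_iso:
  "(\<lambda>(e, p, \<phi>). L_half_auto_of G e p \<phi>)
    \<in> iso (integer_mod_group 2 \<times>\<times> sym_group 3 \<times>\<times> AutoGroup G) (HalfGroup (L_loop G))"
  (is "?h \<in> iso ?P ?H")
proof -
  have carrier_P: "carrier ?P = {0, 1} \<times> {p. p permutes {1..3}} \<times> auto G"
    by (simp add: carrier_integer_mod_group_2 sym_group_def carrier_AutoGroup)
  have image: "?h ` carrier ?P = carrier ?H"
    unfolding carrier_P by (simp add: carrier_HalfGroup half_auto_L_loop)
  have mult: "?h (a \<otimes>\<^bsub>?P\<^esub> b) = ?h a \<otimes>\<^bsub>?H\<^esub> ?h b" if "a \<in> carrier ?P" "b \<in> carrier ?P" for a b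
  proof -
    obtain e p \<phi> e' q \<psi> where a: "a = (e, p, \<phi>)" and b: "b = (e', q, \<psi>)"
      by (cases a, cases b) auto
    have e: "e \<in> {0, 1}" "e' \<in> {0, 1}" and pq: "p permutes {1..3}" "q permutes {1..3}"
      and \<phi>\<psi>: "\<phi> \<in> auto G" "\<psi> \<in> auto G"
      using that unfolding carrier_P a b by simp_all
    then show ?thesis
      using L_half_auto_of_in_half_auto[OF finite_carrier] L_half_auto_of_compose[OF pq(2) \<phi>\<psi> e, of p]
      by (simp add: a b sym_group_def mult_AutoGroup mult_HalfGroup)
  qed
  have "?h \<in> hom ?P ?H"
  proof (rule homI)
    show "?h a \<in> carrier ?H" if "a \<in> carrier ?P" for a
      using imageI[OF that, of ?h] by (simp only: image)
  qed (rule mult)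
  moreover have "inj_on ?h (carrier ?P)"
  proof (rule inj_onI)
    fix a b assume "a \<in> carrier ?P" "b \<in> carrier ?P" and eq: "?h a = ?h b"
    moreover obtain e p \<phi> e' q \<psi> where a: "a = (e, p, \<phi>)" and b: "b = (e', q, \<psi>)"
      by (cases a, cases b) auto
    ultimately have "e \<in> {0, 1}" "e' \<in> {0, 1}" "p permutes {1..3}" "q permutes {1..3}"
      "\<phi> \<in> auto G" "\<psi> \<in> auto G" "L_half_auto_of G e p \<phi> = L_half_auto_of G e' q \<psi>"
      unfolding carrier_P by simp_all
    then show "a = b"
      using L_half_auto_of_inject[of p q \<phi> \<psi> e e'] by (simp add: a b)
  qed
  ultimately show ?thesis
    using image by (simp add: iso_iff)
qed

lemma L_loop_auto_iso:
  "(\<lambda>(p, \<phi>). L_half_auto_of G 0 p \<phi>) \<in> iso (sym_group 3 \<times>\<times> AutoGroup G) (AutoGroup (L_loop G))"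
  (is "?h \<in> iso ?P ?H")
proof -
  have carrier_P: "carrier ?P = {p. p permutes {1..3}} \<times> auto G"
    by (simp add: sym_group_def carrier_AutoGroup)
  have image: "?h ` carrier ?P = carrier ?H"
    unfolding carrier_P by (simp add: carrier_AutoGroup auto_L_loop)
  have mult: "?h (a \<otimes>\<^bsub>?P\<^esub> b) = ?h a \<otimes>\<^bsub>?H\<^esub> ?h b" if "a \<in> carrier ?P" "b \<in> carrier ?P" for a b
  proof -
    obtain p \<phi> q \<psi> where a: "a = (p, \<phi>)" and b: "b = (q, \<psi>)"
      by (cases a, cases b) auto
    have "p permutes {1..3}" "q permutes {1..3}" "\<phi> \<in> auto G" "\<psi> \<in> auto G"
      using that unfolding carrier_P a b by simp_all
    then show ?thesis
      using L_half_auto_of_in_auto[OF finite_carrier] L_half_auto_of_compose[of q \<phi> \<psi> 0 0 p]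
      by (simp add: a b sym_group_def mult_AutoGroup)
  qed
  have "?h \<in> hom ?P ?H"
  proof (rule homI)
    show "?h a \<in> carrier ?H" if "a \<in> carrier ?P" for a
      using imageI[OF that, of ?h] by (simp only: image)
  qed (rule mult)
  moreover have "inj_on ?h (carrier ?P)"
    unfolding carrier_P using L_half_auto_of_inject[where e = 0 and e' = 0] by (intro inj_onI) auto
  ultimately show ?thesis
    using image by (simp add: iso_iff)
qed

end

text \<open>For a group of odd order, exponent \<open>> 2\<close> just says that it is nontrivial.\<close>

lemma (in monoid) group_exponent_trivial: "carrier G = {\<one>} \<Longrightarrow> group_exponent G = 1"
  unfolding group_exponent_def by (rule Least_equality) auto

theorem theorem5p6:
  fixes M :: "('a, 'b) monoid_scheme"
  assumes "comm_group M"
    and "finite (carrier M)"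
    and "odd (order M)"
    and "group_exponent M > 2"
  shows "AutoGroup (L_loop M) \<cong> sym_group 3 \<times>\<times> AutoGroup M
       \<and> HalfGroup (L_loop M) \<cong> integer_mod_group 2 \<times>\<times> sym_group 3 \<times>\<times> AutoGroup M"
proof -
  interpret comm_group M
    by (rule assms(1))
  have "carrier M \<noteq> {\<one>\<^bsub>M\<^esub>}"
    using assms(4) group_exponent_trivial by auto
  then interpret nontrivial_odd_comm_group M
    using assms(2,3) by unfold_locales
  have "group (sym_group 3 \<times>\<times> AutoGroup M)"
    by (intro DirProd_group sym_group_is_group AutoGroup)
  moreover have "group (integer_mod_group 2 \<times>\<times> sym_group 3 \<times>\<times> AutoGroup M)"
    by (intro DirProd_group group_integer_mod_group calculation)
  ultimately show ?thesis
    using L_loop_auto_iso L_loop_half_iso by (auto intro: group.iso_sym is_isoI)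
qed

end
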